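(* Under the scaled-down notification (SDN) policy, for every volunteer $v\in[V]$ and every $t\in[T]$, the probability that $v$ is active in period $t$ equals $\beta_{v,t}$; moreover, $\beta_{v,t}\ge\frac{1}{2-q}$.
   Context: Online volunteer notification problem. An instance consists of volunteers $[V]$, task types $[S]$, horizon $T$, arrival probabilities $\lambda_{s,t}\ge0$ with $\sum_s\lambda_{s,t}\le1$, match probabilities $p_{v,s}\in[0,1]$, and a probability mass function $g$ on the positive integers with CDF $G(\tau)=\sum_{i\le\tau}g(i)$, $G(0)=0$. In each period $t$ at most one task arrives, of type $s$ with probability $\lambda_{s,t}$, independently across periods. All volunteers start active. Upon an arrival the platform notifies a subset of volunteers; each notified active volunteer $v$ responds positively independently with probability $p_{v,s}$. A volunteer active and notified at time $t$ becomes inactive (regardless of response) and active again at $t+Z$, $Z\sim g$ independent; inactive volunteers ignore notifications and are unaffected by them. MDHR: $q=\min_{\tau\in\mathbb{N}}\frac{g(\tau)}{1-G(\tau-1)}$ (with $\frac00:=1$). Ex ante solution: $\mathcal{P}$ is the set of $\mathbf{x}$ with $0\le x_{v,s,t}\le1$ and $\sum_{\tau=1}^t\sum_s\lambda_{s,\tau}x_{v,s,\tau}(1-G(t-\tau))\le1$ for all $v,t$; $f(\mathbf{x})=\sum_{t,s}\lambda_{s,t}(1-\prod_v(1-x_{v,s,t}p_{v,s}))$; $\mathbf{x}^*_{LP}$ maximizes $\sum_{t,s}\lambda_{s,t}\min\{\sum_vx_{v,s,t}p_{v,s},1\}$ over $\mathcal{P}$; $\mathbf{x}^*_{AA}$ is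 the output of: $\mathbf{x}^0=\mathbf{0}$, for $i=1..m$ ($m\in\mathbb{N}$) $\mathbf{y}^i\in\arg\max_{\mathbf{x}\in\mathcal{P}}\langle\mathbf{x},\nabla f(\mathbf{x}^{i-1})\rangle$, $\mathbf{x}^i=\mathbf{x}^{i-1}+\mathbf{y}^i/m$, output $\mathbf{x}^m$; $\mathbf{x}^*_{SQ}$ built for $v=1..V$ in order, $(x^{SQ}_{v,s,t})_{s,t}$ optimal for $\max\sum_{t,s}\lambda_{s,t}\prod_{u<v}(1-p_{u,s}x^{SQ}_{u,s,t})p_{v,s}x_{v,s,t}$ s.t. $0\le x_{v,s,t}\le1$ and $\sum_{\tau\le t}\sum_s\lambda_{s,\tau}x_{v,s,\tau}(1-G(t-\tau))\le1$ for all $t$; $\mathbf{x}^*\in\arg\max_{\mathbf{x}\in\{\mathbf{x}^*_{LP},\mathbf{x}^*_{AA},\mathbf{x}^*_{SQ}\}}f(\mathbf{x})$. SDN policy: $\beta_{v,1}=1$ and $\beta_{v,t}=1-\sum_{t'=1}^{t-1}\sum_{s=1}^S\lambda_{s,t'}\frac{x^*_{v,s,t'}}{2-q}(1-G(t-t'))$ for $t\ge2$; when a task of type $s$ arrives at time $t$, each volunteer $v$ is notified independently with probability $\frac{x^*_{v,s,t}}{(2-q)\beta_{v,t}}$. *)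

theory Defs
  imports "HOL-Probability.Probability"
begin

text \<open>Indexing conventions: volunteers v in {1..V}, task types s in {1..S},
  periods t in {1..T}. lam s t = arrival probability, p v s = match probability,
  g = pmf of the inactivity duration Z (supported on positive integers),
  solutions x v s t (zero outside the index domain).\<close>

definition cdfG :: "nat pmf \<Rightarrow> nat \<Rightarrow> real" where
  "cdfG g \<tau> = (\<Sum>i\<in>{1..\<tau>}. pmf g i)"

definition hazard :: "nat pmf \<Rightarrow> nat \<Rightarrow> real" where
  "hazard g \<tau> = (if pmf g \<tau> = 0 \<and> 1 - cdfG g (\<tau> - 1) = 0 then 1
                  else pmf g \<tau> / (1 - cdfG g (\<tau> - 1)))"

definition mdhr :: "nat pmf \<Rightarrow> real" where
  "mdhr g = (INF \<tau>\<in>{1..}. hazard g \<tau>)"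

definition row_feasible ::
  "nat \<Rightarrow> nat \<Rightarrow> (nat \<Rightarrow> nat \<Rightarrow> real) \<Rightarrow> nat pmf \<Rightarrow> (nat \<Rightarrow> nat \<Rightarrow> real) \<Rightarrow> bool" where
  "row_feasible S T lam g y \<longleftrightarrow>
     (\<forall>s t. s \<notin> {1..S} \<or> t \<notin> {1..T} \<longrightarrow> y s t = 0) \<and>
     (\<forall>s\<in>{1..S}. \<forall>t\<in>{1..T}. 0 \<le> y s t \<and> y s t \<le> 1) \<and>
     (\<forall>t\<in>{1..T}. (\<Sum>\<tau>\<in>{1..t}. \<Sum>s\<in>{1..S}. lam s \<tau> * y s \<tau> * (1 - cdfG g (t - \<tau>))) \<le> 1)"

definition polyP ::
  "nat \<Rightarrow> nat \<Rightarrow> nat \<Rightarrow> (nat \<Rightarrow> nat \<Rightarrow> real) \<Rightarrow> nat pmf \<Rightarrow> (nat \<Rightarrow> nat \<Rightarrow> nat \<Rightarrow> real) set" where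
  "polyP V S T lam g = {x. (\<forall>v\<in>{1..V}. row_feasible S T lam g (x v)) \<and>
                          (\<forall>v. v \<notin> {1..V} \<longrightarrow> x v = (\<lambda>s t. 0))}"

definition obj_f ::
  "nat \<Rightarrow> nat \<Rightarrow> nat \<Rightarrow> (nat \<Rightarrow> nat \<Rightarrow> real) \<Rightarrow> (nat \<Rightarrow> nat \<Rightarrow> real) \<Rightarrow> (nat \<Rightarrow> nat \<Rightarrow> nat \<Rightarrow> real) \<Rightarrow> real" where
  "obj_f V S T lam p x = (\<Sum>t\<in>{1..T}. \<Sum>s\<in>{1..S}.
       lam s t * (1 - (\<Prod>v\<in>{1..V}. 1 - x v s t * p v s)))"

definition grad_f ::
  "nat \<Rightarrow> nat \<Rightarrow> nat \<Rightarrow> (nat \<Rightarrow> nat \<Rightarrow> real) \<Rightarrow> (nat \<Rightarrow> nat \<Rightarrow> real) \<Rightarrow> (nat \<Rightarrow> nat \<Rightarrow> nat \<Rightarrow> real) \<Rightarrow> (nat \<Rightarrow> nat \<Rightarrow> nat \<Rightarrow> real)" where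
  "grad_f V S T lam p x = (\<lambda>v s t. if v \<in> {1..V} \<and> s \<in> {1..S} \<and> t \<in> {1..T}
       then lam s t * p v s * (\<Prod>u\<in>{1..V} - {v}. 1 - x u s t * p u s) else 0)"

definition inner3 ::
  "nat \<Rightarrow> nat \<Rightarrow> nat \<Rightarrow> (nat \<Rightarrow> nat \<Rightarrow> nat \<Rightarrow> real) \<Rightarrow> (nat \<Rightarrow> nat \<Rightarrow> nat \<Rightarrow> real) \<Rightarrow> real" where
  "inner3 V S T x y = (\<Sum>v\<in>{1..V}. \<Sum>s\<in>{1..S}. \<Sum>t\<in>{1..T}. x v s t * y v s t)"

definition lp_obj ::
  "nat \<Rightarrow> nat \<Rightarrow> nat \<Rightarrow> (nat \<Rightarrow> nat \<Rightarrow> real) \<Rightarrow> (nat \<Rightarrow> nat \<Rightarrow> real) \<Rightarrow> (nat \<Rightarrow> nat \<Rightarrow> nat \<Rightarrow> real) \<Rightarrow> real" where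
  "lp_obj V S T lam p x = (\<Sum>t\<in>{1..T}. \<Sum>s\<in>{1..S}.
       lam s t * min (\<Sum>v\<in>{1..V}. x v s t * p v s) 1)"

definition is_LP_opt where
  "is_LP_opt V S T lam p g x \<longleftrightarrow> x \<in> polyP V S T lam g \<and>
     (\<forall>y\<in>polyP V S T lam g. lp_obj V S T lam p y \<le> lp_obj V S T lam p x)"

definition is_AA_output where
  "is_AA_output V S T lam p g x \<longleftrightarrow>
     (\<exists>m::nat. m > 0 \<and> (\<exists>xs ys :: nat \<Rightarrow> nat \<Rightarrow> nat \<Rightarrow> nat \<Rightarrow> real.
        xs 0 = (\<lambda>v s t. 0) \<and>
        (\<forall>i\<in>{1..m}.
           ys i \<in> polyP V S T lam g \<and>
           (\<forall>z\<in>polyP V S T lam g.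
              inner3 V S T z (grad_f V S T lam p (xs (i - 1)))
                \<le> inner3 V S T (ys i) (grad_f V S T lam p (xs (i - 1)))) \<and>
           xs i = (\<lambda>v s t. xs (i - 1) v s t + ys i v s t / real m)) \<and>
        x = xs m))"

definition sq_obj ::
  "nat \<Rightarrow> nat \<Rightarrow> (nat \<Rightarrow> nat \<Rightarrow> real) \<Rightarrow> (nat \<Rightarrow> nat \<Rightarrow> real) \<Rightarrow> (nat \<Rightarrow> nat \<Rightarrow> nat \<Rightarrow> real) \<Rightarrow> nat \<Rightarrow> (nat \<Rightarrow> nat \<Rightarrow> real) \<Rightarrow> real" where
  "sq_obj S T lam p x v y = (\<Sum>t\<in>{1..T}. \<Sum>s\<in>{1..S}.
       lam s t * (\<Prod>u\<in>{1..<v}. 1 - p u s * x u s t) * p v s * y s t)"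

definition is_SQ_output where
  "is_SQ_output V S T lam p g x \<longleftrightarrow>
     (\<forall>v. v \<notin> {1..V} \<longrightarrow> x v = (\<lambda>s t. 0)) \<and>
     (\<forall>v\<in>{1..V}. row_feasible S T lam g (x v) \<and>
        (\<forall>y. row_feasible S T lam g y \<longrightarrow> sq_obj S T lam p x v y \<le> sq_obj S T lam p x v (x v)))"

definition is_ex_ante_solution where
  "is_ex_ante_solution V S T lam p g xs \<longleftrightarrow>
     (\<exists>xLP xAA xSQ. is_LP_opt V S T lam p g xLP \<and> is_AA_output V S T lam p g xAA \<and>
        is_SQ_output V S T lam p g xSQ \<and> xs \<in> {xLP, xAA, xSQ} \<and>
        obj_f V S T lam p xLP \<le> obj_f V S T lam p xs \<and>
        obj_f V S T lam p xAA \<le> obj_f V S T lam p xs \<and>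
        obj_f V S T lam p xSQ \<le> obj_f V S T lam p xs)"

definition sdn_beta ::
  "nat \<Rightarrow> (nat \<Rightarrow> nat \<Rightarrow> real) \<Rightarrow> nat pmf \<Rightarrow> (nat \<Rightarrow> nat \<Rightarrow> nat \<Rightarrow> real) \<Rightarrow> nat \<Rightarrow> nat \<Rightarrow> real" where
  "sdn_beta S lam g x v t = 1 - (\<Sum>t'\<in>{1..<t}. \<Sum>s\<in>{1..S}.
       lam s t' * (x v s t' / (2 - mdhr g)) * (1 - cdfG g (t - t')))"

definition sdn_notif ::
  "nat \<Rightarrow> (nat \<Rightarrow> nat \<Rightarrow> real) \<Rightarrow> nat pmf \<Rightarrow> (nat \<Rightarrow> nat \<Rightarrow> nat \<Rightarrow> real) \<Rightarrow> nat \<Rightarrow> nat \<Rightarrow> nat \<Rightarrow> real" where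
  "sdn_notif S lam g x v s t = x v s t / ((2 - mdhr g) * sdn_beta S lam g x v t)"

definition arrival_pmf :: "nat \<Rightarrow> (nat \<Rightarrow> nat \<Rightarrow> real) \<Rightarrow> nat \<Rightarrow> nat option pmf" where
  "arrival_pmf S lam t = embed_pmf (\<lambda>a. case a of
       None \<Rightarrow> 1 - (\<Sum>s\<in>{1..S}. lam s t)
     | Some s \<Rightarrow> (if s \<in> {1..S} then lam s t else 0))"

text \<open>System state r: volunteer v is active in period t iff r v \<le> t
  (r v = the period in which v becomes active again).\<close>
definition sdn_step ::
  "nat \<Rightarrow> nat \<Rightarrow> (nat \<Rightarrow> nat \<Rightarrow> real) \<Rightarrow> nat pmf \<Rightarrow> (nat \<Rightarrow> nat \<Rightarrow> nat \<Rightarrow> real) \<Rightarrow> nat \<Rightarrow> (nat \<Rightarrow> nat) \<Rightarrow> (nat \<Rightarrow> nat) pmf" where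
  "sdn_step V S lam g x t r = bind_pmf (arrival_pmf S lam t) (\<lambda>a. case a of
       None \<Rightarrow> return_pmf r
     | Some s \<Rightarrow> Pi_pmf {1..V} 0 (\<lambda>v.
          if r v \<le> t then
            bind_pmf (bernoulli_pmf (sdn_notif S lam g x v s t))
              (\<lambda>b. if b then map_pmf (\<lambda>z. t + z) g else return_pmf (r v))
          else return_pmf (r v)))"

text \<open>sdn_state ... n = distribution of the state after periods 1..n,
  i.e. at the start of period n+1.  Initially all volunteers are active.\<close>
primrec sdn_state ::
  "nat \<Rightarrow> nat \<Rightarrow> (nat \<Rightarrow> nat \<Rightarrow> real) \<Rightarrow> nat pmf \<Rightarrow> (nat \<Rightarrow> nat \<Rightarrow> nat \<Rightarrow> real) \<Rightarrow> nat \<Rightarrow> (nat \<Rightarrow> nat) pmf" where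
  "sdn_state V S lam g x 0 = return_pmf (\<lambda>v. 0)"
| "sdn_state V S lam g x (Suc n) =
     bind_pmf (sdn_state V S lam g x n) (sdn_step V S lam g x (Suc n))"

end

theory Submission
  imports Defs
begin

text \<open>Only the reactivation time \<open>r v\<close> of a fixed volunteer matters.  By induction over the
  periods, the probability that \<open>v\<close> is still inactive after period \<open>k\<close> equals the mass of
  the scaled notifications \<open>x/(2-q)\<close> of the past periods that survive beyond \<open>k\<close>: an active
  volunteer is notified with probability \<open>x/((2-q)\<beta>)\<close>, and \<open>\<beta>\<close> is exactly the probability of
  being active, so the two cancel.  The bound \<open>\<beta> \<ge> 1/(2-q)\<close> comes from MDHR: every survival
  term \<open>1 - G\<close> shrinks by a factor \<open>1-q\<close> per period, so the load at \<open>t\<close> is at most \<open>1-q\<close> times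
  the feasible load at \<open>t-1\<close>.  It also keeps the notification probabilities at most 1, which
  the induction needs.\<close>

lemma cdfG_le_1: "cdfG g t \<le> 1"
proof -
  have "cdfG g t = measure_pmf.prob g {1..t}"
    unfolding cdfG_def by (simp add: measure_measure_pmf_finite)
  also have "\<dots> \<le> 1" by simp
  finally show ?thesis .
qed

lemma prob_greaterThan_eq_1_minus_cdfG:
  assumes "pmf g 0 = 0"
  shows "measure_pmf.prob g {j<..} = 1 - cdfG g j"
proof -
  have "measure_pmf.prob g {..j} = pmf g 0 + sum (pmf g) {1..j}"
    by (simp add: measure_measure_pmf_finite atLeast0AtMost[symmetric] sum.atLeast_Suc_atMost)
  then have "measure_pmf.prob g {..j} = cdfG g j"
    using assms by (simp add: cdfG_def)
  then show ?thesis
    using measure_pmf.prob_compl[of "{..j}" g]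
    by (simp add: Compl_eq_Diff_UNIV[symmetric] Compl_atMost)
qed

lemma prob_atMost_eq_1_minus_prob_greaterThan:
  "measure_pmf.prob D {..t} = 1 - measure_pmf.prob D {(t::nat)<..}"
  using measure_pmf.prob_compl[of "{t<..}" D]
  by (simp add: Compl_eq_Diff_UNIV[symmetric] Compl_greaterThan)

lemma mdhr_le_hazard: "1 \<le> t \<Longrightarrow> mdhr g \<le> hazard g t"
  unfolding mdhr_def
  by (rule cINF_lower) (auto intro: bdd_belowI2[where m=0] simp: hazard_def cdfG_le_1)

lemma mdhr_le_1: "mdhr g \<le> 1"
proof -
  have "hazard g 1 \<le> 1"
    unfolding hazard_def cdfG_def using pmf_le_1[of g 1] by auto
  then show ?thesis using mdhr_le_hazard[of 1 g] by simp
qed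

lemma survival_Suc_le: "1 - cdfG g (Suc n) \<le> (1 - mdhr g) * (1 - cdfG g n)"
proof (cases "cdfG g n = 1")
  case True
  then show ?thesis using cdfG_le_1[of g "Suc n"] by (simp add: cdfG_def)
next
  case False
  then have pos: "1 - cdfG g n > 0" using cdfG_le_1[of g n] by simp
  have "mdhr g \<le> pmf g (Suc n) / (1 - cdfG g n)"
    using mdhr_le_hazard[of "Suc n" g] pos by (simp add: hazard_def)
  then have "mdhr g * (1 - cdfG g n) \<le> pmf g (Suc n)"
    using pos by (simp add: pos_le_divide_eq)
  then show ?thesis by (simp add: cdfG_def algebra_simps)
qed

text \<open>\<open>residual_load S lam g y n k\<close> is the expected mass of the notifications \<open>y\<close> of periods
  \<open>1..n\<close> that keep a volunteer inactive beyond period \<open>k\<close>.\<close>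

definition residual_load ::
  "nat \<Rightarrow> (nat \<Rightarrow> nat \<Rightarrow> real) \<Rightarrow> nat pmf \<Rightarrow> (nat \<Rightarrow> nat \<Rightarrow> real) \<Rightarrow> nat \<Rightarrow> nat \<Rightarrow> real" where
  "residual_load S lam g y n k =
     (\<Sum>\<tau>\<in>{1..n}. \<Sum>s\<in>{1..S}. lam s \<tau> * y s \<tau> * (1 - cdfG g (k - \<tau>)))"

lemma row_feasible_iff:
  "row_feasible S T lam g y \<longleftrightarrow>
     (\<forall>s t. s \<notin> {1..S} \<or> t \<notin> {1..T} \<longrightarrow> y s t = 0) \<and>
     (\<forall>s\<in>{1..S}. \<forall>t\<in>{1..T}. 0 \<le> y s t \<and> y s t \<le> 1) \<and>
     (\<forall>t\<in>{1..T}. residual_load S lam g y t t \<le> 1)"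
  unfolding row_feasible_def residual_load_def ..

lemma sdn_beta_eq_residual_load:
  "sdn_beta S lam g x v t = 1 - residual_load S lam g (\<lambda>s \<tau>. x v s \<tau> / (2 - mdhr g)) (t - 1) t"
proof -
  have "{1..<t} = {1..t - 1}" by (cases t) auto
  then show ?thesis unfolding sdn_beta_def residual_load_def by simp
qed

lemma residual_load_Suc:
  "residual_load S lam g y (Suc n) k = residual_load S lam g y n k
     + (\<Sum>s\<in>{1..S}. lam s (Suc n) * y s (Suc n) * (1 - cdfG g (k - Suc n)))"
  unfolding residual_load_def by simp

lemma residual_load_divide:
  "residual_load S lam g (\<lambda>s \<tau>. y s \<tau> / c) n k = residual_load S lam g y n k / c"
  unfolding residual_load_def sum_divide_distrib by (intro sum.cong refl) simp

lemma residual_load_sum: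
  "residual_load S lam g (\<lambda>s \<tau>. \<Sum>i\<in>I. y i s \<tau>) n k = (\<Sum>i\<in>I. residual_load S lam g (y i) n k)"
  unfolding residual_load_def sum_distrib_left sum_distrib_right
  by (simp add: sum.swap[of _ I] mult.assoc)

lemma residual_load_Suc_le:
  assumes nonneg: "\<And>s \<tau>. s \<in> {1..S} \<Longrightarrow> \<tau> \<in> {1..n} \<Longrightarrow> 0 \<le> lam s \<tau> * y s \<tau>"
    and "n \<le> k"
  shows "residual_load S lam g y n (Suc k) \<le> (1 - mdhr g) * residual_load S lam g y n k"
  unfolding residual_load_def sum_distrib_left
proof (intro sum_mono)
  fix \<tau> s assume \<tau>: "\<tau> \<in> {1..n}" and s: "s \<in> {1..S}"
  have "Suc k - \<tau> = Suc (k - \<tau>)" using \<tau> \<open>n \<le> k\<close> by auto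
  then have "lam s \<tau> * y s \<tau> * (1 - cdfG g (Suc k - \<tau>))
      \<le> lam s \<tau> * y s \<tau> * ((1 - mdhr g) * (1 - cdfG g (k - \<tau>)))"
    using survival_Suc_le nonneg[OF s \<tau>] by (simp add: mult_left_mono)
  then show "lam s \<tau> * y s \<tau> * (1 - cdfG g (Suc k - \<tau>))
      \<le> (1 - mdhr g) * (lam s \<tau> * y s \<tau> * (1 - cdfG g (k - \<tau>)))"
    by (simp add: algebra_simps)
qed

lemma row_feasible_average:
  assumes "finite I" "I \<noteq> {}" and feasible: "\<And>i. i \<in> I \<Longrightarrow> row_feasible S T lam g (y i)"
  shows "row_feasible S T lam g (\<lambda>s t. (\<Sum>i\<in>I. y i s t) / card I)"
proof -
  have card: "card I > 0" using assms by (simp add: card_gt_0_iff)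
  have "(\<Sum>i\<in>I. y i s t) \<le> card I" if "s \<in> {1..S}" "t \<in> {1..T}" for s t
    using sum_mono[of I "\<lambda>i. y i s t" "\<lambda>_. 1"] feasible that by (simp add: row_feasible_iff)
  moreover have "(\<Sum>i\<in>I. residual_load S lam g (y i) t t) \<le> card I" if "t \<in> {1..T}" for t
    using sum_mono[of I "\<lambda>i. residual_load S lam g (y i) t t" "\<lambda>_. 1"] feasible that
    by (simp add: row_feasible_iff)
  ultimately show ?thesis
    using feasible card
    by (auto simp: row_feasible_iff residual_load_divide residual_load_sum sum_nonneg)
qed

lemma AA_iterate_eq_sum:
  assumes "xs 0 = (\<lambda>v s t. 0)"
    and "\<forall>i\<in>{1..m}. xs i = (\<lambda>v s t. xs (i - 1) v s t + ys i v s t / real m)"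
  shows "i \<le> m \<Longrightarrow> xs i = (\<lambda>v s t. (\<Sum>j\<in>{1..i}. ys j v s t) / real m)"
proof (induction i)
  case 0
  then show ?case using assms(1) by simp
next
  case (Suc i)
  then show ?case using assms(2) by (auto simp: add_divide_distrib)
qed

lemma AA_output_row_feasible:
  assumes "is_AA_output V S T lam p g x" "v \<in> {1..V}"
  shows "row_feasible S T lam g (x v)"
proof -
  obtain m xs ys where "m > 0" "xs 0 = (\<lambda>v s t. 0)" "x = xs m"
    and step: "\<forall>i\<in>{1..m}. ys i \<in> polyP V S T lam g \<and>
           xs i = (\<lambda>v s t. xs (i - 1) v s t + ys i v s t / real m)"
    using assms(1) unfolding is_AA_output_def by blast
  then have "x v = (\<lambda>s t. (\<Sum>j\<in>{1..m}. ys j v s t) / card {1..m})"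
    using AA_iterate_eq_sum[of xs m ys m] by simp
  moreover have "row_feasible S T lam g (ys j v)" if "j \<in> {1..m}" for j
    using step that assms(2) by (auto simp: polyP_def)
  ultimately show ?thesis
    using \<open>m > 0\<close> row_feasible_average[of "{1..m}"] by simp
qed

lemma ex_ante_solution_row_feasible:
  assumes "is_ex_ante_solution V S T lam p g x" "v \<in> {1..V}"
  shows "row_feasible S T lam g (x v)"
  using assms AA_output_row_feasible[OF _ assms(2)]
  unfolding is_ex_ante_solution_def is_LP_opt_def is_SQ_output_def polyP_def
  by auto

lemma sdn_beta_ge:
  assumes lam_nonneg: "\<forall>s\<in>{1..S}. \<forall>t\<in>{1..T}. 0 \<le> lam s t"
    and feasible: "row_feasible S T lam g (x v)"
    and t: "t \<in> {1..T}"
  shows "1 / (2 - mdhr g) \<le> sdn_beta S lam g x v t"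
proof -
  define q where "q = mdhr g"
  have q: "q \<le> 1" unfolding q_def by (rule mdhr_le_1)
  have "residual_load S lam g (x v) (t - 1) (t - 1) \<le> 1"
  proof (cases "t = 1")
    case True
    then show ?thesis by (simp add: residual_load_def)
  next
    case False
    then have "t - 1 \<in> {1..T}" using t by auto
    then show ?thesis using feasible by (simp add: row_feasible_iff)
  qed
  moreover have "residual_load S lam g (x v) (t - 1) t
      \<le> (1 - q) * residual_load S lam g (x v) (t - 1) (t - 1)"
  proof -
    have "0 \<le> lam s \<tau> * x v s \<tau>" if "s \<in> {1..S}" "\<tau> \<in> {1..t - 1}" for s \<tau>
      using lam_nonneg feasible that t by (auto simp: row_feasible_iff)
    then have "residual_load S lam g (x v) (t - 1) (Suc (t - 1))
        \<le> (1 - q) * residual_load S lam g (x v) (t - 1) (t - 1)"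
      unfolding q_def by (intro residual_load_Suc_le) auto
    then show ?thesis using t by simp
  qed
  ultimately have "residual_load S lam g (x v) (t - 1) t \<le> 1 - q"
    using mult_left_le[of _ "1 - q"] q by fastforce
  then have "residual_load S lam g (x v) (t - 1) t / (2 - q) \<le> (1 - q) / (2 - q)"
    using q by (simp add: divide_right_mono)
  also have "\<dots> = 1 - 1 / (2 - q)"
    using q by (simp add: field_simps)
  finally show ?thesis
    unfolding sdn_beta_eq_residual_load residual_load_divide q_def by simp
qed

lemma measure_bind_pmf:
  "measure_pmf.prob (bind_pmf M f) A = (\<integral>x. measure_pmf.prob (f x) A \<partial>M)"
  unfolding measure_pmf_bind
  by (rule measure_pmf.measure_bind[where N="count_space UNIV"])
     (auto simp: measurable_def space_subprob_algebra sets_measure_pmf_count_space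
           intro: prob_space_imp_subprob_space prob_space_measure_pmf)

lemma pmf_arrival_pmf:
  assumes nonneg: "\<forall>s\<in>{1..S}. 0 \<le> lam s t" and "(\<Sum>s\<in>{1..S}. lam s t) \<le> 1"
  shows "pmf (arrival_pmf S lam t) a = (case a of
       None \<Rightarrow> 1 - (\<Sum>s\<in>{1..S}. lam s t)
     | Some s \<Rightarrow> (if s \<in> {1..S} then lam s t else 0))"
  unfolding arrival_pmf_def
proof (rule pmf_embed_pmf)
  fix a :: "nat option"
  show "0 \<le> (case a of None \<Rightarrow> 1 - (\<Sum>s\<in>{1..S}. lam s t) | Some s \<Rightarrow> (if s \<in> {1..S} then lam s t else 0))"
    using assms by (auto split: option.split)
next
  let ?f = "\<lambda>a. ennreal (case a of None \<Rightarrow> 1 - (\<Sum>s\<in>{1..S}. lam s t) | Some s \<Rightarrow> (if s \<in> {1..S} then lam s t else 0))"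
  have "(\<integral>\<^sup>+ a. ?f a \<partial>count_space UNIV) = sum ?f (insert None (Some ` {1..S}))"
    by (rule nn_integral_count_space') (auto split: option.split)
  also have "\<dots> = ennreal (1 - (\<Sum>s\<in>{1..S}. lam s t)) + (\<Sum>s\<in>{1..S}. ennreal (lam s t))"
    by (simp add: sum.reindex)
  also have "\<dots> = ennreal (1 - (\<Sum>s\<in>{1..S}. lam s t)) + ennreal (\<Sum>s\<in>{1..S}. lam s t)"
    using nonneg by (subst sum_ennreal) auto
  also have "\<dots> = 1"
    using assms by (subst ennreal_plus[symmetric]) (auto intro: sum_nonneg)
  finally show "(\<integral>\<^sup>+ a. ?f a \<partial>count_space UNIV) = 1" .
qed

lemma integral_arrival_pmf:
  assumes nonneg: "\<forall>s\<in>{1..S}. 0 \<le> lam s t" and sum_le: "(\<Sum>s\<in>{1..S}. lam s t) \<le> 1"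
    and "f None = 0"
  shows "(\<integral>a. f a \<partial>arrival_pmf S lam t) = (\<Sum>s\<in>{1..S}. lam s t * f (Some s))"
proof -
  have "(\<integral>a. f a \<partial>arrival_pmf S lam t) = (\<Sum>a\<in>Some ` {1..S}. f a * pmf (arrival_pmf S lam t) a)"
    using \<open>f None = 0\<close>
    by (intro integral_measure_pmf_real)
       (auto simp: set_pmf_iff pmf_arrival_pmf[where S=S and lam=lam and t=t, OF nonneg sum_le]
             split: if_splits option.splits)
  also have "\<dots> = (\<Sum>s\<in>{1..S}. lam s t * f (Some s))"
    by (simp add: sum.reindex pmf_arrival_pmf[where S=S and lam=lam and t=t, OF nonneg sum_le] mult.commute)
  finally show ?thesis .
qed

definition volunteer_step ::
  "nat \<Rightarrow> (nat \<Rightarrow> nat \<Rightarrow> real) \<Rightarrow> nat pmf \<Rightarrow> (nat \<Rightarrow> real) \<Rightarrow> nat \<Rightarrow> nat \<Rightarrow> nat pmf" where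
  "volunteer_step S lam g \<pi> t w = bind_pmf (arrival_pmf S lam t) (\<lambda>a. case a of
       None \<Rightarrow> return_pmf w
     | Some s \<Rightarrow> (if w \<le> t then
            bind_pmf (bernoulli_pmf (\<pi> s))
              (\<lambda>b. if b then map_pmf (\<lambda>z. t + z) g else return_pmf w)
          else return_pmf w))"

lemma sdn_state_Suc_component:
  assumes "v \<in> {1..V}"
  shows "map_pmf (\<lambda>r. r v) (sdn_state V S lam g x (Suc n))
       = bind_pmf (map_pmf (\<lambda>r. r v) (sdn_state V S lam g x n))
           (volunteer_step S lam g (\<lambda>s. sdn_notif S lam g x v s (Suc n)) (Suc n))"
proof -
  have "map_pmf (\<lambda>r. r v) (sdn_step V S lam g x (Suc n) r)
      = volunteer_step S lam g (\<lambda>s. sdn_notif S lam g x v s (Suc n)) (Suc n) (r v)" for r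
    unfolding sdn_step_def volunteer_step_def map_bind_pmf using assms
    by (intro bind_pmf_cong refl) (auto split: option.split simp: Pi_pmf_component)
  then show ?thesis
    by (simp add: map_bind_pmf bind_map_pmf)
qed

lemma prob_volunteer_step_greaterThan:
  assumes nonneg: "\<forall>s\<in>{1..S}. 0 \<le> lam s t" and sum_le: "(\<Sum>s\<in>{1..S}. lam s t) \<le> 1"
    and g0: "pmf g 0 = 0"
    and \<pi>: "\<forall>s\<in>{1..S}. 0 \<le> \<pi> s \<and> \<pi> s \<le> 1"
    and "t \<le> k"
  shows "measure_pmf.prob (volunteer_step S lam g \<pi> t w) {k<..}
     = (\<Sum>s\<in>{1..S}. lam s t * \<pi> s) * indicator {..t} w * (1 - cdfG g (k - t))
       + indicator {k<..} w"
proof (cases "w \<le> t")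
  case True
  have "measure_pmf.prob (map_pmf (\<lambda>z. t + z) g) {k<..} = 1 - cdfG g (k - t)"
  proof -
    have "(\<lambda>z. t + z) -` {k<..} = {k - t<..}" using \<open>t \<le> k\<close> by auto
    then show ?thesis using prob_greaterThan_eq_1_minus_cdfG[OF g0] by simp
  qed
  then have "measure_pmf.prob (volunteer_step S lam g \<pi> t w) {k<..}
      = (\<Sum>s\<in>{1..S}. lam s t * ((1 - cdfG g (k - t)) * \<pi> s))"
    using True \<open>t \<le> k\<close> \<pi>
    by (simp add: volunteer_step_def measure_bind_pmf
        integral_arrival_pmf[where S=S and lam=lam and t=t, OF nonneg sum_le])
  then show ?thesis
    using True \<open>t \<le> k\<close> by (simp add: sum_distrib_left mult_ac)
next
  case False
  then have "volunteer_step S lam g \<pi> t w = bind_pmf (arrival_pmf S lam t) (\<lambda>_. return_pmf w)"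
    unfolding volunteer_step_def by (intro bind_pmf_cong) (auto split: option.split)
  then show ?thesis using False by simp
qed

lemma prob_bind_volunteer_step_greaterThan:
  assumes "\<forall>s\<in>{1..S}. 0 \<le> lam s t" "(\<Sum>s\<in>{1..S}. lam s t) \<le> 1" "pmf g 0 = 0"
    and "\<forall>s\<in>{1..S}. 0 \<le> \<pi> s \<and> \<pi> s \<le> 1" "t \<le> k"
  shows "measure_pmf.prob (bind_pmf D (volunteer_step S lam g \<pi> t)) {k<..}
     = (\<Sum>s\<in>{1..S}. lam s t * \<pi> s) * measure_pmf.prob D {..t} * (1 - cdfG g (k - t))
       + measure_pmf.prob D {k<..}"
  unfolding measure_bind_pmf
    prob_volunteer_step_greaterThan[where S=S and lam=lam and t=t and \<pi>=\<pi>, OF assms]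
  by (subst Bochner_Integration.integral_add)
     (auto simp: measure_pmf.emeasure_finite less_top[symmetric])

lemma sdn_inactive_prob:
  assumes g0: "pmf g 0 = 0"
    and lam_nonneg: "\<forall>s\<in>{1..S}. \<forall>t\<in>{1..T}. 0 \<le> lam s t"
    and lam_sum: "\<forall>t\<in>{1..T}. (\<Sum>s\<in>{1..S}. lam s t) \<le> 1"
    and v: "v \<in> {1..V}"
    and feasible: "row_feasible S T lam g (x v)"
  shows "n < T \<Longrightarrow> n \<le> k \<Longrightarrow>
    measure_pmf.prob (map_pmf (\<lambda>r. r v) (sdn_state V S lam g x n)) {k<..}
      = residual_load S lam g (\<lambda>s \<tau>. x v s \<tau> / (2 - mdhr g)) n k"
proof (induction n arbitrary: k)
  case 0
  then show ?case by (simp add: residual_load_def)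
next
  case (Suc n)
  define t where "t = Suc n"
  define q where "q = mdhr g"
  define \<beta> where "\<beta> = sdn_beta S lam g x v t"
  define D where "D = map_pmf (\<lambda>r. r v) (sdn_state V S lam g x n)"
  have t: "t \<in> {1..T}" using Suc.prems t_def by auto
  have q: "q \<le> 1" unfolding q_def by (rule mdhr_le_1)
  have active: "measure_pmf.prob D {..t} = \<beta>"
    using Suc.IH[of t] Suc.prems
    unfolding prob_atMost_eq_1_minus_prob_greaterThan \<beta>_def sdn_beta_eq_residual_load D_def t_def
    by simp
  have "1 / (2 - q) \<le> \<beta>"
    unfolding \<beta>_def q_def by (rule sdn_beta_ge[where x=x and v=v, OF lam_nonneg feasible t])
  then have \<beta>: "1 \<le> (2 - q) * \<beta>" "\<beta> > 0"
    using q by (simp_all add: divide_le_eq mult.commute less_le_trans[of 0 "1 / (2 - q)"])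
  have notif: "sdn_notif S lam g x v s t = x v s t / ((2 - q) * \<beta>)" for s
    unfolding sdn_notif_def q_def \<beta>_def ..
  have "0 \<le> sdn_notif S lam g x v s t \<and> sdn_notif S lam g x v s t \<le> 1" if "s \<in> {1..S}" for s
  proof -
    have "0 \<le> x v s t" "x v s t \<le> 1"
      using feasible that t by (simp_all add: row_feasible_iff)
    then show ?thesis using \<beta> by (simp add: notif divide_le_eq)
  qed
  then have "measure_pmf.prob (bind_pmf D (volunteer_step S lam g (\<lambda>s. sdn_notif S lam g x v s t) t)) {k<..}
      = (\<Sum>s\<in>{1..S}. lam s t * sdn_notif S lam g x v s t) * \<beta> * (1 - cdfG g (k - t))
        + measure_pmf.prob D {k<..}"
    using lam_nonneg lam_sum t Suc.prems g0 unfolding active[symmetric]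
    by (intro prob_bind_volunteer_step_greaterThan) (auto simp: t_def)
  also have "bind_pmf D (volunteer_step S lam g (\<lambda>s. sdn_notif S lam g x v s t) t)
      = map_pmf (\<lambda>r. r v) (sdn_state V S lam g x (Suc n))"
    unfolding D_def t_def by (rule sdn_state_Suc_component[OF v, symmetric])
  also have "(\<Sum>s\<in>{1..S}. lam s t * sdn_notif S lam g x v s t) * \<beta>
      = (\<Sum>s\<in>{1..S}. lam s t * (x v s t / (2 - q)))"
    unfolding notif sum_distrib_right using \<beta> q by (intro sum.cong refl) (simp add: field_simps)
  finally show ?case
    using Suc.IH[of k] Suc.prems
    unfolding residual_load_Suc D_def q_def t_def by (simp add: sum_distrib_right)
qed

theorem lemma7:
  fixes V S T :: nat
    and lam :: "nat \<Rightarrow> nat \<Rightarrow> real"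
    and p :: "nat \<Rightarrow> nat \<Rightarrow> real"
    and g :: "nat pmf"
    and xstar :: "nat \<Rightarrow> nat \<Rightarrow> nat \<Rightarrow> real"
  assumes g_pos: "pmf g 0 = 0"
    and lam_nonneg: "\<forall>s\<in>{1..S}. \<forall>t\<in>{1..T}. 0 \<le> lam s t"
    and lam_sum: "\<forall>t\<in>{1..T}. (\<Sum>s\<in>{1..S}. lam s t) \<le> 1"
    and p_prob: "\<forall>v\<in>{1..V}. \<forall>s\<in>{1..S}. 0 \<le> p v s \<and> p v s \<le> 1"
    and xstar: "is_ex_ante_solution V S T lam p g xstar"
  shows "\<forall>v\<in>{1..V}. \<forall>t\<in>{1..T}.
           measure_pmf.prob (sdn_state V S lam g xstar (t - 1)) {r. r v \<le> t}
             = sdn_beta S lam g xstar v t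
           \<and> sdn_beta S lam g xstar v t \<ge> 1 / (2 - mdhr g)"
proof (intro ballI conjI)
  fix v t assume v: "v \<in> {1..V}" and t: "t \<in> {1..T}"
  have feasible: "row_feasible S T lam g (xstar v)"
    by (rule ex_ante_solution_row_feasible[OF xstar v])
  show "1 / (2 - mdhr g) \<le> sdn_beta S lam g xstar v t"
    by (rule sdn_beta_ge[where x=xstar and v=v, OF lam_nonneg feasible t])
  let ?D = "map_pmf (\<lambda>r. r v) (sdn_state V S lam g xstar (t - 1))"
  have "measure_pmf.prob (sdn_state V S lam g xstar (t - 1)) {r. r v \<le> t} = measure_pmf.prob ?D {..t}"
    by (simp add: vimage_def)
  also have "\<dots> = 1 - measure_pmf.prob ?D {t<..}"
    by (rule prob_atMost_eq_1_minus_prob_greaterThan)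
  also have "measure_pmf.prob ?D {t<..}
      = residual_load S lam g (\<lambda>s \<tau>. xstar v s \<tau> / (2 - mdhr g)) (t - 1) t"
    using t by (intro sdn_inactive_prob[where x=xstar, OF g_pos lam_nonneg lam_sum v feasible]) auto
  finally show "measure_pmf.prob (sdn_state V S lam g xstar (t - 1)) {r. r v \<le> t}
      = sdn_beta S lam g xstar v t"
    unfolding sdn_beta_eq_residual_load .
qed

end
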